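(* Let $\psi:(0,1]\to(0,\infty)$ with $\psi(1)=1$ and $\lim_{r\to0+}\psi(r)=0$, and let $f\in C^\psi(\mathbb{R}^d)$. (i) If $I_\psi\subset(1,2)$, then for every sufficiently small $\varepsilon>0$ there exists $C=C(d,\psi,\varepsilon)>0$ such that $\|Df\|_{C^0}\le C\|f\|_{C^0}+\varepsilon[Df]_{C^{-1;\psi}}$. (ii) If $I_\psi\subset(2,3)$, then for every sufficiently small $\varepsilon>0$ there exists $C=C(d,\psi,\varepsilon)>0$ such that $\|Df\|_{C^0}+\|D^2f\|_{C^0}\le C\|f\|_{C^0}+\varepsilon[D^2f]_{C^{-2;\psi}}$.
   Context: $g:(0,1]\to(0,\infty)$ is almost increasing if $c\,g(r)\le g(R)$ for some $c\in(0,1]$ and all $0<r\le R\le1$, almost decreasing if $g(R)\le Cg(r)$ for some $C\ge1$ and all $0<r\le R\le1$. $M_\psi=\inf\{\alpha: \psi(r)/r^\alpha\text{ almost decreasing}\}$, $m_\psi=\sup\{\alpha: \psi(r)/r^\alpha\text{ almost increasing}\}$, $I_\psi=[m_\psi,M_\psi]$. $\|f\|_{C^0}=\sup|f|$, $\|D^jf\|_{C^0}=\max_{|\gamma|=j}\|D^\gamma f\|_{C^0}$. For $j\in\mathbb{N}_0$, $[f]_{C^{-j;\psi}}=\sup_x\sup_{0<|h|\le1}\frac{|f(x+h)-f(x)|}{\psi(|h|)|h|^{-j}}$ and $[D^kf]_{C^{-k;\psi}}=\max_{|\gamma|=k}[D^\gamma f]_{C^{-k;\psi}}$. If $m_\psi\in(k,k+1]$,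 $k\in\mathbb{N}_0$, $C^\psi(\mathbb{R}^d)$ is the set of continuous $f$ with $D^\gamma f$ bounded continuous for $|\gamma|\le k$ and $[D^\gamma f]_{C^{-k;\psi}}<\infty$ for $|\gamma|=k$. *)

theory Defs
  imports "HOL-Analysis.Analysis" "HOL-Library.Extended_Real"
begin

definition almost_increasing :: "(real \<Rightarrow> real) \<Rightarrow> bool" where
  "almost_increasing g \<longleftrightarrow>
     (\<exists>c. 0 < c \<and> c \<le> 1 \<and> (\<forall>r R. 0 < r \<and> r \<le> R \<and> R \<le> 1 \<longrightarrow> c * g r \<le> g R))"

definition almost_decreasing :: "(real \<Rightarrow> real) \<Rightarrow> bool" where
  "almost_decreasing g \<longleftrightarrow>
     (\<exists>C. 1 \<le> C \<and> (\<forall>r R. 0 < r \<and> r \<le> R \<and> R \<le> 1 \<longrightarrow> g R \<le> C * g r))"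

text \<open>Upper and lower indices, as extended reals (inf of the empty set is +infinity,
  sup of the empty set is -infinity).\<close>

definition M_psi :: "(real \<Rightarrow> real) \<Rightarrow> ereal" where
  "M_psi \<psi> = Inf (ereal ` {\<alpha>. almost_decreasing (\<lambda>r. \<psi> r / r powr \<alpha>)})"

definition m_psi :: "(real \<Rightarrow> real) \<Rightarrow> ereal" where
  "m_psi \<psi> = Sup (ereal ` {\<alpha>. almost_increasing (\<lambda>r. \<psi> r / r powr \<alpha>)})"

definition I_psi :: "(real \<Rightarrow> real) \<Rightarrow> ereal set" where
  "I_psi \<psi> = {m_psi \<psi> .. M_psi \<psi>}"

definition pdiff :: "'a::euclidean_space \<Rightarrow> ('a \<Rightarrow> real) \<Rightarrow> 'a \<Rightarrow> real" where
  "pdiff i f x = deriv (\<lambda>t. f (x + t *\<^sub>R i)) 0"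

definition has_pdiff :: "'a::euclidean_space \<Rightarrow> ('a \<Rightarrow> real) \<Rightarrow> bool" where
  "has_pdiff i f \<longleftrightarrow> (\<forall>x. (\<lambda>t. f (x + t *\<^sub>R i)) field_differentiable (at 0))"

text \<open>Iterated partial derivative D^gamma, the multi-index gamma given as a list of
  basis directions (applied from the last to the first).\<close>

fun dpart :: "'a::euclidean_space list \<Rightarrow> ('a \<Rightarrow> real) \<Rightarrow> 'a \<Rightarrow> real" where
  "dpart [] f = f"
| "dpart (i # is) f = pdiff i (dpart is f)"

definition mindices :: "nat \<Rightarrow> 'a::euclidean_space list set" where
  "mindices j = {\<gamma>. set \<gamma> \<subseteq> Basis \<and> length \<gamma> = j}"

definition sup0 :: "('a \<Rightarrow> real) \<Rightarrow> real" where
  "sup0 f = Sup (range (\<lambda>x. \<bar>f x\<bar>))"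

definition normD :: "nat \<Rightarrow> ('a::euclidean_space \<Rightarrow> real) \<Rightarrow> real" where
  "normD j f = Max ((\<lambda>\<gamma>. sup0 (dpart \<gamma> f)) ` (mindices j :: 'a list set))"

definition hquot :: "nat \<Rightarrow> (real \<Rightarrow> real) \<Rightarrow> ('a::euclidean_space \<Rightarrow> real) \<Rightarrow> real set" where
  "hquot j \<psi> f = {\<bar>f (x + h) - f x\<bar> / (\<psi> (norm h) * norm h powr (- real j)) | x h.
                    0 < norm h \<and> norm h \<le> 1}"

definition hsemi :: "nat \<Rightarrow> (real \<Rightarrow> real) \<Rightarrow> ('a::euclidean_space \<Rightarrow> real) \<Rightarrow> real" where
  "hsemi j \<psi> f = Sup (hquot j \<psi> f)"

definition semiD :: "nat \<Rightarrow> (real \<Rightarrow> real) \<Rightarrow> ('a::euclidean_space \<Rightarrow> real) \<Rightarrow> real" where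
  "semiD k \<psi> f = Max ((\<lambda>\<gamma>. hsemi k \<psi> (dpart \<gamma> f)) ` (mindices k :: 'a list set))"

definition Cpsi_k :: "(real \<Rightarrow> real) \<Rightarrow> nat \<Rightarrow> ('a::euclidean_space \<Rightarrow> real) \<Rightarrow> bool" where
  "Cpsi_k \<psi> k f \<longleftrightarrow>
     (\<forall>\<gamma>. set \<gamma> \<subseteq> Basis \<and> length \<gamma> < k \<longrightarrow> (\<forall>i\<in>Basis. has_pdiff i (dpart \<gamma> f))) \<and>
     (\<forall>\<gamma>. set \<gamma> \<subseteq> Basis \<and> length \<gamma> \<le> k \<longrightarrow>
          continuous_on UNIV (dpart \<gamma> f) \<and> bounded (range (dpart \<gamma> f))) \<and>
     (\<forall>\<gamma>. set \<gamma> \<subseteq> Basis \<and> length \<gamma> = k \<longrightarrow> bdd_above (hquot k \<psi> (dpart \<gamma> f)))"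

definition Cpsi :: "(real \<Rightarrow> real) \<Rightarrow> ('a::euclidean_space \<Rightarrow> real) set" where
  "Cpsi \<psi> = {f. \<exists>k::nat. ereal (real k) < m_psi \<psi> \<and> m_psi \<psi> \<le> ereal (real k + 1) \<and> Cpsi_k \<psi> k f}"

end

theory Submission
  imports Defs
begin

text \<open>If \<open>I_psi \<psi> \<subseteq> (k, k + 1)\<close>, then \<open>\<psi> r / r powr \<alpha>\<close> is almost increasing for some \<open>\<alpha> > k\<close>, so
  with \<open>\<psi> 1 = 1\<close> we get \<open>\<psi> r \<le> r powr \<alpha> / c\<close>. Hence \<open>hsemi k \<psi> g\<close> bounds the increments of \<open>g\<close>
  over lengths \<open>\<xi> \<le> t\<close> by a factor \<open>t powr (\<alpha> - k) / c\<close>, which tends to \<open>0\<close> with \<open>t\<close>.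
  The mean value theorem on a coordinate segment of length \<open>t\<close> bounds \<open>|\<partial>u x|\<close> by
  \<open>2 sup |u| / t\<close> plus the oscillation of \<open>\<partial>u\<close> on the segment. For \<open>k = 1\<close> this is the claim once
  \<open>t\<close> is chosen so that the factor equals \<open>\<epsilon>\<close>. For \<open>k = 2\<close> it is applied to \<open>f\<close>, whose first
  derivatives are Lipschitz with constant \<open>\<parallel>D\<^sup>2f\<parallel>\<close>, and to \<open>\<partial>f\<close>, whose derivatives are controlled by
  the seminorm; combining the two bounds absorbs half of \<open>\<parallel>D\<^sup>2f\<parallel>\<close>.\<close>

section \<open>Powers and the indices of \<open>\<psi>\<close>\<close>

lemma exists_powr_eq:
  fixes a \<beta> :: real
  assumes "0 < a" "a \<le> 1" "0 < \<beta>"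
  shows "\<exists>t. 0 < t \<and> t \<le> 1 \<and> t powr \<beta> = a"
proof (intro exI conjI)
  show "0 < a powr (1 / \<beta>)" "a powr (1 / \<beta>) \<le> 1" "(a powr (1 / \<beta>)) powr \<beta> = a"
    using assms by (auto simp: powr_powr intro: powr_le1)
qed

lemma almost_increasing_powr_upper_bound:
  assumes "\<psi> 1 = 1" and "almost_increasing (\<lambda>r. \<psi> r / r powr \<alpha>)"
  obtains c where "0 < c" "c \<le> 1" "\<And>r. 0 < r \<Longrightarrow> r \<le> 1 \<Longrightarrow> \<psi> r \<le> r powr \<alpha> / c"
proof -
  obtain c where c: "0 < c" "c \<le> 1"
    "\<And>r R. 0 < r \<Longrightarrow> r \<le> R \<Longrightarrow> R \<le> 1 \<Longrightarrow> c * (\<psi> r / r powr \<alpha>) \<le> \<psi> R / R powr \<alpha>"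
    using assms(2) unfolding almost_increasing_def by blast
  have "\<psi> r \<le> r powr \<alpha> / c" if "0 < r" "r \<le> 1" for r
    using c(3)[of r 1] that c(1) assms(1) by (simp add: field_simps)
  with c(1,2) show thesis by (rule that)
qed

lemma almost_decreasing_powr_lower_bound:
  assumes "\<psi> 1 = 1" and "almost_decreasing (\<lambda>r. \<psi> r / r powr \<beta>)"
  obtains C where "1 \<le> C" "\<And>r. 0 < r \<Longrightarrow> r \<le> 1 \<Longrightarrow> r powr \<beta> / C \<le> \<psi> r"
proof -
  obtain C where C: "1 \<le> C"
    "\<And>r R. 0 < r \<Longrightarrow> r \<le> R \<Longrightarrow> R \<le> 1 \<Longrightarrow> \<psi> R / R powr \<beta> \<le> C * (\<psi> r / r powr \<beta>)"
    using assms(2) unfolding almost_decreasing_def by blast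
  have "r powr \<beta> / C \<le> \<psi> r" if "0 < r" "r \<le> 1" for r
    using C(2)[of r 1] that C(1) assms(1) by (simp add: field_simps)
  with C(1) show thesis by (rule that)
qed

lemma almost_increasing_le_almost_decreasing:
  assumes "\<psi> 1 = 1"
    and "almost_increasing (\<lambda>r. \<psi> r / r powr \<alpha>)" "almost_decreasing (\<lambda>r. \<psi> r / r powr \<beta>)"
  shows "\<alpha> \<le> \<beta>"
proof (rule ccontr)
  assume "\<not> \<alpha> \<le> \<beta>"
  obtain c where c: "0 < c" "c \<le> 1" "\<And>r. 0 < r \<Longrightarrow> r \<le> 1 \<Longrightarrow> \<psi> r \<le> r powr \<alpha> / c"
    using almost_increasing_powr_upper_bound[OF assms(1,2)] by blast
  obtain C where C: "1 \<le> C" "\<And>r. 0 < r \<Longrightarrow> r \<le> 1 \<Longrightarrow> r powr \<beta> / C \<le> \<psi> r"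
    using almost_decreasing_powr_lower_bound[OF assms(1,3)] by blast
  obtain r where r: "0 < r" "r \<le> 1" "r powr (\<alpha> - \<beta>) = c / (2 * C)"
    using exists_powr_eq[of "c / (2 * C)" "\<alpha> - \<beta>"] c C \<open>\<not> \<alpha> \<le> \<beta>\<close> by (auto simp: field_simps)
  have "r powr \<alpha> = r powr \<beta> * r powr (\<alpha> - \<beta>)"
    by (simp flip: powr_add)
  hence "\<psi> r \<le> r powr \<beta> / (2 * C)"
    using c(3)[OF r(1,2)] c(1) r(3) by simp
  moreover have "r powr \<beta> / (2 * C) < r powr \<beta> / C"
    using r(1) C(1) by (simp add: field_simps)
  ultimately show False using C(2)[OF r(1,2)] by linarith
qed

lemma m_psi_le_M_psi:
  assumes "\<psi> 1 = 1"
  shows "m_psi \<psi> \<le> M_psi \<psi>"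
  unfolding m_psi_def M_psi_def
  by (rule Sup_least, rule Inf_greatest) (auto intro: almost_increasing_le_almost_decreasing[of \<psi>, OF assms])

lemma m_psi_in_I_psi: "\<psi> 1 = 1 \<Longrightarrow> m_psi \<psi> \<in> I_psi \<psi>"
  unfolding I_psi_def using m_psi_le_M_psi by auto

lemma I_psi_subset_imp_powr_bound:
  assumes "\<psi> 1 = 1" and "I_psi \<psi> \<subseteq> {ereal (real k)<..<ereal (real k + 1)}"
  obtains \<alpha> c where "real k < \<alpha>" "0 < c" "c \<le> 1" "\<And>r. 0 < r \<Longrightarrow> r \<le> 1 \<Longrightarrow> \<psi> r \<le> r powr \<alpha> / c"
proof -
  have "m_psi \<psi> \<in> {ereal (real k)<..<ereal (real k + 1)}"
    using assms(2) m_psi_in_I_psi[of \<psi>, OF assms(1)] by blast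
  hence "ereal (real k) < m_psi \<psi>" by simp
  then obtain \<alpha> where \<alpha>: "almost_increasing (\<lambda>r. \<psi> r / r powr \<alpha>)" "real k < \<alpha>"
    unfolding m_psi_def less_Sup_iff by auto
  obtain c where "0 < c" "c \<le> 1" "\<And>r. 0 < r \<Longrightarrow> r \<le> 1 \<Longrightarrow> \<psi> r \<le> r powr \<alpha> / c"
    using almost_increasing_powr_upper_bound[of \<psi>, OF assms(1) \<alpha>(1)] by blast
  with \<alpha>(2) show thesis by (rule that)
qed

lemma Cpsi_imp_Cpsi_k:
  assumes "\<psi> 1 = 1" and "I_psi \<psi> \<subseteq> {ereal (real k)<..<ereal (real k + 1)}" and "f \<in> Cpsi \<psi>"
  shows "Cpsi_k \<psi> k f"
proof -
  have "m_psi \<psi> \<in> {ereal (real k)<..<ereal (real k + 1)}"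
    using assms(2) m_psi_in_I_psi[of \<psi>, OF assms(1)] by blast
  hence m: "ereal (real k) < m_psi \<psi>" "m_psi \<psi> < ereal (real k + 1)" by auto
  obtain j where j: "ereal (real j) < m_psi \<psi>" "m_psi \<psi> \<le> ereal (real j + 1)" "Cpsi_k \<psi> j f"
    using assms(3) unfolding Cpsi_def by blast
  have "ereal (real j) < ereal (real k + 1)" "ereal (real k) < ereal (real j + 1)"
    using less_trans[OF j(1) m(2)] less_le_trans[OF m(1) j(2)] .
  hence "j = k" by simp
  with j(3) show ?thesis by simp
qed

lemma abs_le_sup0:
  assumes "bounded (range u)"
  shows "\<bar>u x\<bar> \<le> sup0 u"
proof -
  obtain B where "\<And>x. \<bar>u x\<bar> \<le> B" using assms unfolding bounded_iff by auto
  hence "bdd_above (range (\<lambda>x. \<bar>u x\<bar>))" by (auto intro!: bdd_aboveI)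
  thus ?thesis unfolding sup0_def by (auto intro: cSup_upper)
qed

lemma sup0_least: "(\<And>x. \<bar>u x\<bar> \<le> B) \<Longrightarrow> sup0 u \<le> B"
  unfolding sup0_def by (auto intro!: cSup_least)

lemma has_real_derivative_pdiff_line:
  assumes "has_pdiff e u"
  shows "((\<lambda>s. u (x + s *\<^sub>R e)) has_real_derivative pdiff e u (x + t *\<^sub>R e)) (at t)"
proof -
  let ?g = "\<lambda>s. u (x + t *\<^sub>R e + s *\<^sub>R e)"
  have "(?g has_field_derivative pdiff e u (x + t *\<^sub>R e)) (at (t + - t))"
    using assms unfolding has_pdiff_def pdiff_def DERIV_deriv_iff_field_differentiable[symmetric]
    by simp
  hence "((\<lambda>s. ?g (s + - t)) has_field_derivative pdiff e u (x + t *\<^sub>R e)) (at t)"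
    by (simp only: DERIV_shift)
  moreover have "(\<lambda>s. ?g (s + - t)) = (\<lambda>s. u (x + s *\<^sub>R e))"
    by (simp add: algebra_simps)
  ultimately show ?thesis by simp
qed

lemma mvt_pdiff_line:
  assumes "has_pdiff e u" "0 < t"
  obtains \<xi> where "0 < \<xi>" "\<xi> < t" "u (x + t *\<^sub>R e) - u x = t * pdiff e u (x + \<xi> *\<^sub>R e)"
  using MVT2[OF assms(2), of "\<lambda>s. u (x + s *\<^sub>R e)" "\<lambda>s. pdiff e u (x + s *\<^sub>R e)"]
    has_real_derivative_pdiff_line[OF assms(1)] that by auto

lemma increment_le_pdiff_bound:
  assumes "has_pdiff e u" "0 < \<xi>" "\<And>y. \<bar>pdiff e u y\<bar> \<le> M"
  shows "\<bar>u (x + \<xi> *\<^sub>R e) - u x\<bar> \<le> \<xi> * M"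
proof -
  obtain z where "u (x + \<xi> *\<^sub>R e) - u x = \<xi> * pdiff e u (x + z *\<^sub>R e)"
    using mvt_pdiff_line[OF assms(1,2)] by blast
  thus ?thesis using assms(2,3) by (simp add: abs_mult mult_left_mono)
qed

lemma sup0_pdiff_le:
  assumes "has_pdiff e u" "bounded (range u)" "0 < t"
    and osc: "\<And>x \<xi>. 0 < \<xi> \<Longrightarrow> \<xi> < t \<Longrightarrow> \<bar>pdiff e u (x + \<xi> *\<^sub>R e) - pdiff e u x\<bar> \<le> K"
  shows "sup0 (pdiff e u) \<le> 2 * sup0 u / t + K"
proof (rule sup0_least)
  fix x
  obtain \<xi> where \<xi>: "0 < \<xi>" "\<xi> < t" "u (x + t *\<^sub>R e) - u x = t * pdiff e u (x + \<xi> *\<^sub>R e)"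
    using mvt_pdiff_line[OF assms(1,3)] by blast
  have "t * \<bar>pdiff e u (x + \<xi> *\<^sub>R e)\<bar> \<le> 2 * sup0 u"
    using \<xi>(3) abs_le_sup0[OF assms(2), of x] abs_le_sup0[OF assms(2), of "x + t *\<^sub>R e"] assms(3)
    by (simp flip: abs_mult)
  hence "\<bar>pdiff e u (x + \<xi> *\<^sub>R e)\<bar> \<le> 2 * sup0 u / t"
    using assms(3) by (simp add: pos_le_divide_eq mult.commute)
  thus "\<bar>pdiff e u x\<bar> \<le> 2 * sup0 u / t + K"
    using osc[OF \<xi>(1,2), of x] by linarith
qed

section \<open>Increments controlled by the \<open>\<psi>\<close>-seminorm\<close>

lemma abs_diff_le_hsemi:
  assumes "bdd_above (hquot k \<psi> g)" "0 < norm h" "norm h \<le> 1" "0 < \<psi> (norm h)"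
  shows "\<bar>g (x + h) - g x\<bar> \<le> hsemi k \<psi> g * (\<psi> (norm h) * norm h powr (- real k))"
proof -
  have "\<bar>g (x + h) - g x\<bar> / (\<psi> (norm h) * norm h powr (- real k)) \<in> hquot k \<psi> g"
    unfolding hquot_def using assms by blast
  hence "\<bar>g (x + h) - g x\<bar> / (\<psi> (norm h) * norm h powr (- real k)) \<le> hsemi k \<psi> g"
    unfolding hsemi_def using assms(1) by (rule cSup_upper)
  thus ?thesis using assms(2,4) by (simp add: divide_le_eq)
qed

lemma hsemi_nonneg:
  fixes g :: "'a::euclidean_space \<Rightarrow> real"
  assumes "bdd_above (hquot k \<psi> g)" "\<And>r. 0 < r \<Longrightarrow> r \<le> 1 \<Longrightarrow> 0 < \<psi> r"
  shows "0 \<le> hsemi k \<psi> g"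
proof -
  obtain i :: 'a where i: "i \<in> Basis" using nonempty_Basis by blast
  have "\<bar>g (0 + i) - g 0\<bar> \<le> hsemi k \<psi> g * (\<psi> (norm i) * norm i powr (- real k))"
    using abs_diff_le_hsemi[OF assms(1), of i 0] assms(2)[of 1] i by (simp add: norm_Basis)
  hence "0 \<le> hsemi k \<psi> g * \<psi> 1" using i by (simp add: norm_Basis)
  thus ?thesis using assms(2)[of 1] by (simp add: zero_le_mult_iff)
qed

lemma hsemi_increment_le:
  fixes g :: "'a::euclidean_space \<Rightarrow> real"
  assumes "bdd_above (hquot k \<psi> g)" "i \<in> Basis" "\<And>r. 0 < r \<Longrightarrow> r \<le> 1 \<Longrightarrow> 0 < \<psi> r"
    and bound: "\<And>r. 0 < r \<Longrightarrow> r \<le> 1 \<Longrightarrow> \<psi> r \<le> r powr \<alpha> / c" and "0 < c" "real k \<le> \<alpha>"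
    and "0 < \<xi>" "\<xi> \<le> t" "t \<le> 1"
  shows "\<bar>g (x + \<xi> *\<^sub>R i) - g x\<bar> \<le> hsemi k \<psi> g * (t powr (\<alpha> - real k) / c)"
proof -
  have "\<bar>g (x + \<xi> *\<^sub>R i) - g x\<bar> \<le> hsemi k \<psi> g * (\<psi> \<xi> * \<xi> powr (- real k))"
    using abs_diff_le_hsemi[OF assms(1), of "\<xi> *\<^sub>R i"] assms(2,3,7-9) by simp
  also have "\<psi> \<xi> * \<xi> powr (- real k) \<le> \<xi> powr \<alpha> / c * \<xi> powr (- real k)"
    using bound assms(7-9) by (intro mult_right_mono) auto
  also have "\<dots> = \<xi> powr (\<alpha> - real k) / c"
    by (simp add: powr_add[symmetric])
  also have "\<dots> \<le> t powr (\<alpha> - real k) / c"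
    using assms(5-8) by (intro divide_right_mono powr_mono2) auto
  finally show ?thesis
    using hsemi_nonneg[OF assms(1,3)] by (simp add: mult_left_mono)
qed

lemma finite_mindices: "finite (mindices k :: 'a::euclidean_space list set)"
  unfolding mindices_def by (rule finite_lists_length_eq[OF finite_Basis])

lemma mindices_nonempty: "(mindices k :: 'a::euclidean_space list set) \<noteq> {}"
proof -
  obtain i :: 'a where "i \<in> Basis" using nonempty_Basis by blast
  hence "replicate k i \<in> mindices k" unfolding mindices_def by auto
  thus ?thesis by blast
qed

lemma mindices_1: "mindices 1 = (\<lambda>i. [i]) ` Basis"
  unfolding mindices_def by (auto simp: length_Suc_conv)

lemma mindices_2: "mindices 2 = (\<lambda>(i, j). [i, j]) ` (Basis \<times> Basis)"
  unfolding mindices_def by (fastforce simp: length_Suc_conv numeral_2_eq_2)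

lemma sup0_le_normD: "\<gamma> \<in> mindices k \<Longrightarrow> sup0 (dpart \<gamma> f) \<le> normD k f"
  unfolding normD_def using finite_mindices by (intro Max_ge) auto

lemma hsemi_le_semiD: "\<gamma> \<in> mindices k \<Longrightarrow> hsemi k \<psi> (dpart \<gamma> f) \<le> semiD k \<psi> f"
  unfolding semiD_def using finite_mindices by (intro Max_ge) auto

lemma normD_least:
  "(\<And>\<gamma>. \<gamma> \<in> mindices k \<Longrightarrow> sup0 (dpart \<gamma> f) \<le> B) \<Longrightarrow> normD k f \<le> B"
  unfolding normD_def using finite_mindices mindices_nonempty by (subst Max_le_iff) auto

lemma Cpsi_k_has_pdiff:
  "Cpsi_k \<psi> k f \<Longrightarrow> set \<gamma> \<subseteq> Basis \<Longrightarrow> length \<gamma> < k \<Longrightarrow> i \<in> Basis \<Longrightarrow> has_pdiff i (dpart \<gamma> f)"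
  unfolding Cpsi_k_def by blast

lemma Cpsi_k_bounded:
  "Cpsi_k \<psi> k f \<Longrightarrow> set \<gamma> \<subseteq> Basis \<Longrightarrow> length \<gamma> \<le> k \<Longrightarrow> bounded (range (dpart \<gamma> f))"
  unfolding Cpsi_k_def by blast

lemma Cpsi_k_bdd_above_hquot:
  "Cpsi_k \<psi> k f \<Longrightarrow> \<gamma> \<in> mindices k \<Longrightarrow> bdd_above (hquot k \<psi> (dpart \<gamma> f))"
  unfolding Cpsi_k_def mindices_def by simp

lemma semiD_nonneg:
  assumes "Cpsi_k \<psi> k (f :: 'a::euclidean_space \<Rightarrow> real)" "\<And>r. 0 < r \<Longrightarrow> r \<le> 1 \<Longrightarrow> 0 < \<psi> r"
  shows "0 \<le> semiD k \<psi> f"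
proof -
  obtain \<gamma> :: "'a list" where "\<gamma> \<in> mindices k" using mindices_nonempty by blast
  thus ?thesis
    using hsemi_nonneg[OF Cpsi_k_bdd_above_hquot[OF assms(1)] assms(2)] hsemi_le_semiD
    by (meson order_trans)
qed

section \<open>Estimates for a fixed step length\<close>

lemma normD_1_le:
  fixes f :: "'a::euclidean_space \<Rightarrow> real"
  assumes f: "Cpsi_k \<psi> 1 f" and pos: "\<And>r. 0 < r \<Longrightarrow> r \<le> 1 \<Longrightarrow> 0 < \<psi> r"
    and bound: "\<And>r. 0 < r \<Longrightarrow> r \<le> 1 \<Longrightarrow> \<psi> r \<le> r powr \<alpha> / c" and "0 < c" "1 \<le> \<alpha>"
    and t: "0 < t" "t \<le> 1"
  shows "normD 1 f \<le> 2 * sup0 f / t + t powr (\<alpha> - 1) / c * semiD 1 \<psi> f"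
proof (rule normD_least)
  fix \<gamma> :: "'a list" assume "\<gamma> \<in> mindices 1"
  then obtain i where i: "i \<in> Basis" "\<gamma> = [i]" unfolding mindices_1 by blast
  have "sup0 (pdiff i f) \<le> 2 * sup0 f / t + t powr (\<alpha> - 1) / c * semiD 1 \<psi> f"
  proof (rule sup0_pdiff_le)
    show "has_pdiff i f" using Cpsi_k_has_pdiff[OF f, of "[]" i] i by simp
    show "bounded (range f)" using Cpsi_k_bounded[OF f, of "[]"] by simp
    fix x \<xi> assume "0 < \<xi>" "\<xi> < t"
    have bdd: "bdd_above (hquot 1 \<psi> (pdiff i f))"
      using Cpsi_k_bdd_above_hquot[OF f, of "[i]"] i by (simp add: mindices_def)
    have "\<bar>pdiff i f (x + \<xi> *\<^sub>R i) - pdiff i f x\<bar> \<le> hsemi 1 \<psi> (pdiff i f) * (t powr (\<alpha> - 1) / c)"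
      using hsemi_increment_le[OF bdd i(1) pos bound] \<open>0 < c\<close> \<open>1 \<le> \<alpha>\<close> \<open>0 < \<xi>\<close> \<open>\<xi> < t\<close> t by simp
    also have "\<dots> \<le> semiD 1 \<psi> f * (t powr (\<alpha> - 1) / c)"
      using hsemi_le_semiD[of "[i]" 1 \<psi> f] i \<open>0 < c\<close>
      by (intro mult_right_mono) (simp_all add: mindices_def)
    finally show "\<bar>pdiff i f (x + \<xi> *\<^sub>R i) - pdiff i f x\<bar> \<le> t powr (\<alpha> - 1) / c * semiD 1 \<psi> f"
      by (simp only: mult.commute)
  qed (rule t(1))
  thus "sup0 (dpart \<gamma> f) \<le> 2 * sup0 f / t + t powr (\<alpha> - 1) / c * semiD 1 \<psi> f" using i by simp
qed

lemma normD_1_le_normD_2: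
  fixes f :: "'a::euclidean_space \<Rightarrow> real"
  assumes f: "Cpsi_k \<psi> 2 f" and "0 < s"
  shows "normD 1 f \<le> 2 * sup0 f / s + s * normD 2 f"
proof (rule normD_least)
  fix \<gamma> :: "'a list" assume "\<gamma> \<in> mindices 1"
  then obtain i where i: "i \<in> Basis" "\<gamma> = [i]" unfolding mindices_1 by blast
  have D2: "\<bar>pdiff i (pdiff i f) y\<bar> \<le> normD 2 f" for y
    using order_trans[OF abs_le_sup0[OF Cpsi_k_bounded[OF f, of "[i, i]"]] sup0_le_normD[of "[i, i]" 2 f]] i
    by (simp add: mindices_def)
  have "sup0 (pdiff i f) \<le> 2 * sup0 f / s + s * normD 2 f"
  proof (rule sup0_pdiff_le)
    show "has_pdiff i f" using Cpsi_k_has_pdiff[OF f, of "[]" i] i by simp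
    show "bounded (range f)" using Cpsi_k_bounded[OF f, of "[]"] by simp
    fix x \<xi> assume "0 < \<xi>" "\<xi> < s"
    have "has_pdiff i (pdiff i f)" using Cpsi_k_has_pdiff[OF f, of "[i]" i] i by simp
    hence "\<bar>pdiff i f (x + \<xi> *\<^sub>R i) - pdiff i f x\<bar> \<le> \<xi> * normD 2 f"
      using increment_le_pdiff_bound \<open>0 < \<xi>\<close> D2 by blast
    also have "\<dots> \<le> s * normD 2 f"
      using \<open>\<xi> < s\<close> D2[of 0] by (intro mult_right_mono) auto
    finally show "\<bar>pdiff i f (x + \<xi> *\<^sub>R i) - pdiff i f x\<bar> \<le> s * normD 2 f" .
  qed (rule \<open>0 < s\<close>)
  thus "sup0 (dpart \<gamma> f) \<le> 2 * sup0 f / s + s * normD 2 f" using i by simp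
qed

lemma normD_2_le:
  fixes f :: "'a::euclidean_space \<Rightarrow> real"
  assumes f: "Cpsi_k \<psi> 2 f" and pos: "\<And>r. 0 < r \<Longrightarrow> r \<le> 1 \<Longrightarrow> 0 < \<psi> r"
    and bound: "\<And>r. 0 < r \<Longrightarrow> r \<le> 1 \<Longrightarrow> \<psi> r \<le> r powr \<alpha> / c" and "0 < c" "2 \<le> \<alpha>"
    and t: "0 < t" "t \<le> 1"
  shows "normD 2 f \<le> 2 * normD 1 f / t + t powr (\<alpha> - 2) / c * semiD 2 \<psi> f"
proof (rule normD_least)
  fix \<gamma> :: "'a list" assume "\<gamma> \<in> mindices 2"
  then obtain i j where ij: "i \<in> Basis" "j \<in> Basis" "\<gamma> = [i, j]" by (auto simp: mindices_2)
  have "sup0 (pdiff i (pdiff j f)) \<le> 2 * sup0 (pdiff j f) / t + t powr (\<alpha> - 2) / c * semiD 2 \<psi> f"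
  proof (rule sup0_pdiff_le)
    show "has_pdiff i (pdiff j f)" using Cpsi_k_has_pdiff[OF f, of "[j]" i] ij by simp
    show "bounded (range (pdiff j f))" using Cpsi_k_bounded[OF f, of "[j]"] ij by simp
    fix x \<xi> assume "0 < \<xi>" "\<xi> < t"
    have bdd: "bdd_above (hquot 2 \<psi> (pdiff i (pdiff j f)))"
      using Cpsi_k_bdd_above_hquot[OF f, of "[i, j]"] ij by (simp add: mindices_def)
    have "\<bar>pdiff i (pdiff j f) (x + \<xi> *\<^sub>R i) - pdiff i (pdiff j f) x\<bar>
        \<le> hsemi 2 \<psi> (pdiff i (pdiff j f)) * (t powr (\<alpha> - 2) / c)"
      using hsemi_increment_le[OF bdd ij(1) pos bound] \<open>0 < c\<close> \<open>2 \<le> \<alpha>\<close> \<open>0 < \<xi>\<close> \<open>\<xi> < t\<close> t by simp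
    also have "\<dots> \<le> semiD 2 \<psi> f * (t powr (\<alpha> - 2) / c)"
      using hsemi_le_semiD[of "[i, j]" 2 \<psi> f] ij \<open>0 < c\<close>
      by (intro mult_right_mono) (simp_all add: mindices_def)
    finally show "\<bar>pdiff i (pdiff j f) (x + \<xi> *\<^sub>R i) - pdiff i (pdiff j f) x\<bar>
        \<le> t powr (\<alpha> - 2) / c * semiD 2 \<psi> f"
      by (simp only: mult.commute)
  qed (rule t(1))
  moreover have "sup0 (pdiff j f) \<le> normD 1 f"
    using sup0_le_normD[of "[j]" 1 f] ij by (simp add: mindices_def)
  hence "2 * sup0 (pdiff j f) / t \<le> 2 * normD 1 f / t"
    using t by (simp add: divide_right_mono)
  ultimately show "sup0 (dpart \<gamma> f) \<le> 2 * normD 1 f / t + t powr (\<alpha> - 2) / c * semiD 2 \<psi> f"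
    using ij by simp
qed

text \<open>Inserting the first bound into the second gives \<open>B \<le> 16 F / t\<^sup>2 + B / 2 + S\<close>.\<close>

lemma absorb_interpolation_bounds:
  fixes t A B F S :: real
  assumes t: "0 < t" "t \<le> 1" and "0 \<le> S"
    and A: "A \<le> 8 * F / t + t / 4 * B" and B: "B \<le> 2 * A / t + S"
  shows "A + B \<le> (16 / t + 32 / t\<^sup>2) * F + 5 / 2 * S"
proof -
  have "2 * A \<le> 2 * (8 * F / t + t / 4 * B)"
    using A by (rule mult_left_mono) simp
  hence "2 * A / t \<le> 2 * (8 * F / t + t / 4 * B) / t"
    by (rule divide_right_mono) (use t in simp)
  also have "\<dots> = 16 * F / t\<^sup>2 + B / 2"
    using t by (simp add: field_simps power2_eq_square)
  finally have B2: "B \<le> 32 * F / t\<^sup>2 + 2 * S"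
    using B by linarith
  have "t / 4 * B \<le> t / 4 * (32 * F / t\<^sup>2 + 2 * S)"
    using B2 t by (intro mult_left_mono) auto
  also have "\<dots> = 8 * F / t + t * S / 2"
    using t by (simp add: field_simps power2_eq_square)
  also have "t * S / 2 \<le> S / 2"
    using t \<open>0 \<le> S\<close> by (simp add: mult_left_le_one_le)
  finally have "A \<le> 16 * F / t + S / 2"
    using A by linarith
  moreover have "(16 / t + 32 / t\<^sup>2) * F = 16 * F / t + 32 * F / t\<^sup>2"
    by (simp add: distrib_right)
  ultimately show ?thesis
    using B2 by linarith
qed

lemma normD_1_add_normD_2_le:
  fixes f :: "'a::euclidean_space \<Rightarrow> real"
  assumes f: "Cpsi_k \<psi> 2 f" and pos: "\<And>r. 0 < r \<Longrightarrow> r \<le> 1 \<Longrightarrow> 0 < \<psi> r"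
    and bound: "\<And>r. 0 < r \<Longrightarrow> r \<le> 1 \<Longrightarrow> \<psi> r \<le> r powr \<alpha> / c" and "0 < c" "2 \<le> \<alpha>"
    and t: "0 < t" "t \<le> 1"
  shows "normD 1 f + normD 2 f
    \<le> (16 / t + 32 / t\<^sup>2) * sup0 f + 5 / 2 * (t powr (\<alpha> - 2) / c * semiD 2 \<psi> f)"
proof (rule absorb_interpolation_bounds[OF t])
  show "0 \<le> t powr (\<alpha> - 2) / c * semiD 2 \<psi> f"
    using semiD_nonneg[OF f pos] \<open>0 < c\<close> by simp
  show "normD 1 f \<le> 8 * sup0 f / t + t / 4 * normD 2 f"
    using normD_1_le_normD_2[OF f, of "t / 4"] t by simp
  show "normD 2 f \<le> 2 * normD 1 f / t + t powr (\<alpha> - 2) / c * semiD 2 \<psi> f"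
    by (rule normD_2_le[OF f pos bound \<open>0 < c\<close> \<open>2 \<le> \<alpha>\<close> t])
qed

lemma interpolation_order_1:
  assumes pos: "\<And>r. 0 < r \<Longrightarrow> r \<le> 1 \<Longrightarrow> 0 < \<psi> r" and "\<psi> 1 = 1"
    and "I_psi \<psi> \<subseteq> {ereal 1<..<ereal 2}" and "0 < \<epsilon>" "\<epsilon> < 1"
  shows "\<exists>C>0. \<forall>f::'a::euclidean_space \<Rightarrow> real. f \<in> Cpsi \<psi> \<longrightarrow>
    normD 1 f \<le> C * sup0 f + \<epsilon> * semiD 1 \<psi> f"
proof -
  have I: "I_psi \<psi> \<subseteq> {ereal (real 1)<..<ereal (real 1 + 1)}" using assms(3) by simp
  obtain \<alpha> c where \<alpha>: "1 < \<alpha>" "0 < c" "c \<le> 1"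
    and bound: "\<And>r. 0 < r \<Longrightarrow> r \<le> 1 \<Longrightarrow> \<psi> r \<le> r powr \<alpha> / c"
    using I_psi_subset_imp_powr_bound[of \<psi>, OF \<open>\<psi> 1 = 1\<close> I] by auto
  obtain t where t: "0 < t" "t \<le> 1" "t powr (\<alpha> - 1) = c * \<epsilon>"
    using exists_powr_eq[of "c * \<epsilon>" "\<alpha> - 1"] \<alpha> assms(4,5) by (auto simp: mult_le_one)
  have "normD 1 f \<le> 2 / t * sup0 f + \<epsilon> * semiD 1 \<psi> f" if "f \<in> Cpsi \<psi>" for f :: "'a \<Rightarrow> real"
    using normD_1_le[OF Cpsi_imp_Cpsi_k[of \<psi>, OF \<open>\<psi> 1 = 1\<close> I that] pos bound \<alpha>(2) _ t(1,2)] \<alpha>(1,2) t(3)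
    by simp
  thus ?thesis using t(1) by (intro exI[of _ "2 / t"]) auto
qed

lemma interpolation_order_2:
  assumes pos: "\<And>r. 0 < r \<Longrightarrow> r \<le> 1 \<Longrightarrow> 0 < \<psi> r" and "\<psi> 1 = 1"
    and "I_psi \<psi> \<subseteq> {ereal 2<..<ereal 3}" and "0 < \<epsilon>" "\<epsilon> < 1"
  shows "\<exists>C>0. \<forall>f::'a::euclidean_space \<Rightarrow> real. f \<in> Cpsi \<psi> \<longrightarrow>
    normD 1 f + normD 2 f \<le> C * sup0 f + \<epsilon> * semiD 2 \<psi> f"
proof -
  have I: "I_psi \<psi> \<subseteq> {ereal (real 2)<..<ereal (real 2 + 1)}" using assms(3) by simp
  obtain \<alpha> c where \<alpha>: "2 < \<alpha>" "0 < c" "c \<le> 1"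
    and bound: "\<And>r. 0 < r \<Longrightarrow> r \<le> 1 \<Longrightarrow> \<psi> r \<le> r powr \<alpha> / c"
    using I_psi_subset_imp_powr_bound[of \<psi>, OF \<open>\<psi> 1 = 1\<close> I] by auto
  have "c * \<epsilon> \<le> 1" using \<alpha>(3) assms(4,5) by (simp add: mult_le_one)
  then obtain t where t: "0 < t" "t \<le> 1" "t powr (\<alpha> - 2) = 2 * c * \<epsilon> / 5"
    using exists_powr_eq[of "2 * c * \<epsilon> / 5" "\<alpha> - 2"] \<alpha> assms(4) by auto
  have "normD 1 f + normD 2 f \<le> (16 / t + 32 / t\<^sup>2) * sup0 f + \<epsilon> * semiD 2 \<psi> f"
    if "f \<in> Cpsi \<psi>" for f :: "'a \<Rightarrow> real"
    using normD_1_add_normD_2_le[OF Cpsi_imp_Cpsi_k[of \<psi>, OF \<open>\<psi> 1 = 1\<close> I that] pos bound \<alpha>(2) _ t(1,2)]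
      \<alpha>(1,2) t(3) by simp
  thus ?thesis using t(1) by (intro exI[of _ "16 / t + 32 / t\<^sup>2"]) (auto intro: add_pos_pos)
qed

theorem lemma2p3:
  fixes \<psi> :: "real \<Rightarrow> real"
  assumes pos: "\<forall>r. 0 < r \<and> r \<le> 1 \<longrightarrow> 0 < \<psi> r"
    and one: "\<psi> 1 = 1"
    and lim: "(\<psi> \<longlongrightarrow> 0) (at_right 0)"
  shows "(I_psi \<psi> \<subseteq> {ereal 1<..<ereal 2} \<longrightarrow>
           (\<exists>\<epsilon>0>0. \<forall>\<epsilon>. 0 < \<epsilon> \<and> \<epsilon> < \<epsilon>0 \<longrightarrow>
              (\<exists>C>0. \<forall>f::'a::euclidean_space \<Rightarrow> real. f \<in> Cpsi \<psi> \<longrightarrow>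
                 normD 1 f \<le> C * sup0 f + \<epsilon> * semiD 1 \<psi> f)))
       \<and> (I_psi \<psi> \<subseteq> {ereal 2<..<ereal 3} \<longrightarrow>
           (\<exists>\<epsilon>0>0. \<forall>\<epsilon>. 0 < \<epsilon> \<and> \<epsilon> < \<epsilon>0 \<longrightarrow>
              (\<exists>C>0. \<forall>f::'a::euclidean_space \<Rightarrow> real. f \<in> Cpsi \<psi> \<longrightarrow>
                 normD 1 f + normD 2 f \<le> C * sup0 f + \<epsilon> * semiD 2 \<psi> f)))"
proof -
  have pos': "\<And>r. 0 < r \<Longrightarrow> r \<le> 1 \<Longrightarrow> 0 < \<psi> r" using pos by blast
  have small_eps: "\<exists>\<epsilon>0>0. \<forall>\<epsilon>. 0 < \<epsilon> \<and> \<epsilon> < \<epsilon>0 \<longrightarrow> P \<epsilon>"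
    if "\<And>\<epsilon>. 0 < \<epsilon> \<Longrightarrow> \<epsilon> < 1 \<Longrightarrow> P \<epsilon>" for P :: "real \<Rightarrow> bool"
    using that by (intro exI[of _ "1 :: real"]) simp
  show ?thesis
  proof (intro conjI impI)
    assume "I_psi \<psi> \<subseteq> {ereal 1<..<ereal 2}"
    from interpolation_order_1[of \<psi>, OF pos' one this]
    show "\<exists>\<epsilon>0>0. \<forall>\<epsilon>. 0 < \<epsilon> \<and> \<epsilon> < \<epsilon>0 \<longrightarrow> (\<exists>C>0. \<forall>f::'a \<Rightarrow> real. f \<in> Cpsi \<psi> \<longrightarrow>
        normD 1 f \<le> C * sup0 f + \<epsilon> * semiD 1 \<psi> f)"
      by (rule small_eps)
  next
    assume "I_psi \<psi> \<subseteq> {ereal 2<..<ereal 3}"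
    from interpolation_order_2[of \<psi>, OF pos' one this]
    show "\<exists>\<epsilon>0>0. \<forall>\<epsilon>. 0 < \<epsilon> \<and> \<epsilon> < \<epsilon>0 \<longrightarrow> (\<exists>C>0. \<forall>f::'a \<Rightarrow> real. f \<in> Cpsi \<psi> \<longrightarrow>
        normD 1 f + normD 2 f \<le> C * sup0 f + \<epsilon> * semiD 2 \<psi> f)"
      by (rule small_eps)
  qed
qed

end
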